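(* Let $V$ be an $R$-module with a cyclic Whittaker vector $w\in V$ of type $\eta$ (so $V=Rw$). Then a vector $v\in V$ is a Whittaker vector of type $\eta$ if and only if $v=zw$ for some $z\in Z(R)$.
   Context: Let $f\in\mathbb{C}[H]$ be a polynomial. $R=R(f)$ is the associative $\mathbb{C}$-algebra generated by $E,F,H$ with relations $EF-FE=f(H)$, $HE-EH=E$, $HF-FH=-F$. Let $R(E)=\mathbb{C}[E]$. $Z(R)$ denotes the center of $R$ (it is the polynomial ring $\mathbb{C}[\Omega]$, $\Omega=2FE+u(H+1)$ where $f(H)=\tfrac12(u(H+1)-u(H))$). Fix an algebra homomorphism $\eta:R(E)\to\mathbb{C}$ with $\eta(E)\neq 0$. A vector $v$ of an $R$-module is a Whittaker vector of type $\eta$ if $Ev=\eta(E)v$; it is a cyclic Whittaker vector of $V$ if moreover $V=Rv$. *)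

theory Defs
  imports "HOL-Analysis.Analysis" "HOL-Computational_Algebra.Polynomial"
begin

text \<open>An R(f)-module structure on it is given by three linear operators E, F, H
  satisfying the defining relations of R(f).\<close>

definition poly_op :: "(complex \<Rightarrow> 'v::ab_group_add \<Rightarrow> 'v) \<Rightarrow> complex poly
    \<Rightarrow> ('v \<Rightarrow> 'v) \<Rightarrow> 'v \<Rightarrow> 'v" where
  "poly_op sc p T x = (\<Sum>i\<le>degree p. sc (coeff p i) ((T ^^ i) x))"

definition is_R_module :: "(complex \<Rightarrow> 'v::ab_group_add \<Rightarrow> 'v) \<Rightarrow> complex poly
    \<Rightarrow> ('v \<Rightarrow> 'v) \<Rightarrow> ('v \<Rightarrow> 'v) \<Rightarrow> ('v \<Rightarrow> 'v) \<Rightarrow> bool" where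
  "is_R_module sc f E F H \<longleftrightarrow>
     vector_space sc \<and>
     Vector_Spaces.linear sc sc E \<and> Vector_Spaces.linear sc sc F \<and> Vector_Spaces.linear sc sc H \<and>
     (\<forall>x. E (F x) - F (E x) = poly_op sc f H x) \<and>
     (\<forall>x. H (E x) - E (H x) = E x) \<and>
     (\<forall>x. H (F x) - F (H x) = - F x)"

inductive_set R_span :: "(complex \<Rightarrow> 'v::ab_group_add \<Rightarrow> 'v)
    \<Rightarrow> ('v \<Rightarrow> 'v) \<Rightarrow> ('v \<Rightarrow> 'v) \<Rightarrow> ('v \<Rightarrow> 'v) \<Rightarrow> 'v \<Rightarrow> 'v set"
  for sc E F H w where
  gen: "w \<in> R_span sc E F H w"
| zero: "0 \<in> R_span sc E F H w"
| add: "x \<in> R_span sc E F H w \<Longrightarrow> y \<in> R_span sc E F H w \<Longrightarrow> x + y \<in> R_span sc E F H w"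
| smult: "x \<in> R_span sc E F H w \<Longrightarrow> sc a x \<in> R_span sc E F H w"
| actE: "x \<in> R_span sc E F H w \<Longrightarrow> E x \<in> R_span sc E F H w"
| actF: "x \<in> R_span sc E F H w \<Longrightarrow> F x \<in> R_span sc E F H w"
| actH: "x \<in> R_span sc E F H w \<Longrightarrow> H x \<in> R_span sc E F H w"

text \<open>Whittaker vector of type eta, where c = eta(E).\<close>
definition whittaker_vector :: "('v \<Rightarrow> 'v) \<Rightarrow> (complex \<Rightarrow> 'v \<Rightarrow> 'v) \<Rightarrow> complex \<Rightarrow> 'v \<Rightarrow> bool" where
  "whittaker_vector E sc c v \<longleftrightarrow> E v = sc c v"

definition Casimir :: "(complex \<Rightarrow> 'v::ab_group_add \<Rightarrow> 'v) \<Rightarrow> complex poly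
    \<Rightarrow> ('v \<Rightarrow> 'v) \<Rightarrow> ('v \<Rightarrow> 'v) \<Rightarrow> ('v \<Rightarrow> 'v) \<Rightarrow> 'v \<Rightarrow> 'v" where
  "Casimir sc u E F H x = sc 2 (F (E x)) + poly_op sc (u \<circ>\<^sub>p [:1, 1:]) H x"

end

theory Submission
  imports Defs
begin

text \<open>Write \<open>c = \<eta>(E)\<close> and \<open>Zw = Z(R) w\<close>. Every vector of \<open>V = R w\<close> is
  a finite sum of vectors \<open>H^i z\<close> with \<open>z \<in> Zw\<close>: the space of such sums is stable
  under \<open>H\<close>, and under \<open>E\<close> and \<open>F\<close> because they commute with \<open>H\<close> up to a shift
  and map \<open>Zw\<close> into it (for \<open>F\<close> this uses \<open>\<Omega> z = 2c F z + u(H+1) z\<close> on Whittaker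
  vectors \<open>z\<close>). Since \<open>EH = (H - 1)E\<close>, the operator \<open>E - c\<close> sends \<open>H^(m+1) z\<close> to
  \<open>-c(m+1) H^m z\<close> modulo lower powers of \<open>H\<close>, for every Whittaker vector \<open>z\<close>.
  As \<open>c \<noteq> 0\<close>, a Whittaker vector written as such a sum has no component of positive
  degree in \<open>H\<close>, so it lies in \<open>Zw\<close>. Conversely \<open>\<Omega>\<close> commutes with \<open>E\<close>, so every
  \<open>p(\<Omega>) w\<close> is a Whittaker vector.\<close>

locale complex_vector_space = vector_space scale for scale :: "complex \<Rightarrow> 'v::ab_group_add \<Rightarrow> 'v"
begin

sublocale vector_space_pair scale scale ..

abbreviation lin :: "('v \<Rightarrow> 'v) \<Rightarrow> bool" where
  "lin \<equiv> Vector_Spaces.linear scale scale"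

lemma linear_funpow: "lin T \<Longrightarrow> lin (T ^^ n)"
  by (induct n) (simp_all add: linear_id Vector_Spaces.linear_compose)

lemma linear_plus_scale: "lin T \<Longrightarrow> lin (\<lambda>x. T x + scale b x)"
  by (intro linear_compose_add linear_scale_self)

lemma poly_op_degree_le:
  "degree p \<le> n \<Longrightarrow> poly_op scale p T x = (\<Sum>i\<le>n. scale (coeff p i) ((T ^^ i) x))"
  unfolding poly_op_def by (rule sum.mono_neutral_left) (auto simp: coeff_eq_0)

lemma poly_op_0 [simp]: "poly_op scale 0 T x = 0"
  by (simp add: poly_op_def)

lemma poly_op_const: "poly_op scale [:a:] T x = scale a x"
  by (simp add: poly_op_def)

lemma poly_op_add: "poly_op scale (p + q) T x = poly_op scale p T x + poly_op scale q T x"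
proof -
  have "degree (p + q) \<le> max (degree p) (degree q)"
    by (rule degree_add_le) auto
  then show ?thesis
    by (simp add: poly_op_degree_le[of _ "max (degree p) (degree q)"] scale_left_distrib sum.distrib)
qed

lemma poly_op_smult: "poly_op scale (smult a p) T x = scale a (poly_op scale p T x)"
  by (simp add: poly_op_degree_le[of _ "degree p"] scale_sum_right)

lemma poly_op_pCons:
  assumes "lin T"
  shows "poly_op scale (pCons a p) T x = scale a x + T (poly_op scale p T x)"
proof -
  have "poly_op scale (pCons a p) T x = (\<Sum>i\<le>Suc (degree p). scale (coeff (pCons a p) i) ((T ^^ i) x))"
    by (rule poly_op_degree_le) (simp add: degree_pCons_le)
  also have "\<dots> = scale a x + (\<Sum>i\<le>degree p. scale (coeff p i) ((T ^^ Suc i) x))"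
    by (subst sum.atMost_Suc_shift) simp
  also have "(\<Sum>i\<le>degree p. scale (coeff p i) ((T ^^ Suc i) x)) = T (poly_op scale p T x)"
    using assms by (simp add: poly_op_def linear_sum linear_scale)
  finally show ?thesis .
qed

lemma linear_poly_op: "lin T \<Longrightarrow> lin (poly_op scale p T)"
proof (induct p rule: pCons_induct)
  case 0
  have "poly_op scale 0 T = (\<lambda>x. 0)"
    by (simp add: fun_eq_iff)
  then show ?case
    by (simp add: linear_zero)
next
  case (pCons a p)
  have "lin (\<lambda>x. T (poly_op scale p T x))"
    using Vector_Spaces.linear_compose[OF pCons(2)[OF pCons(3)] pCons(3)] by (simp add: o_def)
  then have "lin (\<lambda>x. scale a x + T (poly_op scale p T x))"
    by (intro linear_compose_add linear_scale_self)
  with pCons(3) show ?case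
    by (simp add: poly_op_pCons)
qed

lemma poly_op_intertwine:
  assumes "lin S" "lin T" "lin T'" "\<And>x. S (T x) = T' (S x)"
  shows "S (poly_op scale p T x) = poly_op scale p T' (S x)"
  using assms by (induct p arbitrary: x rule: pCons_induct)
    (simp_all add: poly_op_pCons linear_0 linear_add linear_scale)

lemma poly_op_shift:
  assumes "lin T"
  shows "poly_op scale p (\<lambda>y. T y + scale b y) x = poly_op scale (p \<circ>\<^sub>p [:b, 1:]) T x"
proof (induct p rule: pCons_induct)
  case (pCons a p)
  let ?q = "p \<circ>\<^sub>p [:b, 1:]"
  have "pCons a p \<circ>\<^sub>p [:b, 1:] = [:a:] + smult b ?q + pCons 0 ?q"
    by (simp add: pcompose_pCons)
  then show ?case
    using pCons assms linear_plus_scale[OF assms]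
    by (simp add: poly_op_pCons poly_op_add poly_op_const poly_op_smult)
qed simp

end

locale linear_operator = complex_vector_space scale
  for scale :: "complex \<Rightarrow> 'v::ab_group_add \<Rightarrow> 'v" +
  fixes H :: "'v \<Rightarrow> 'v"
  assumes linear_H: "Vector_Spaces.linear scale scale H"
begin

fun H_filtration :: "'v set \<Rightarrow> nat \<Rightarrow> 'v set" where
  "H_filtration S 0 = {0}"
| "H_filtration S (Suc m) = {x + y | x y. x \<in> (H ^^ m) ` S \<and> y \<in> H_filtration S m}"

definition H_hull :: "'v set \<Rightarrow> 'v set" where
  "H_hull S = (\<Union>m. H_filtration S m)"

lemma linear_H_pow: "lin (H ^^ m)"
  by (rule linear_funpow[OF linear_H])

lemma H_filtration_SucI:
  "z \<in> S \<Longrightarrow> y \<in> H_filtration S m \<Longrightarrow> (H ^^ m) z + y \<in> H_filtration S (Suc m)"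
  by auto

lemma H_filtration_SucE:
  assumes "x \<in> H_filtration S (Suc m)"
  obtains z y where "x = (H ^^ m) z + y" "z \<in> S" "y \<in> H_filtration S m"
  using assms by auto

declare H_filtration.simps(2) [simp del]

lemma subspace_H_filtration: "subspace S \<Longrightarrow> subspace (H_filtration S m)"
  by (induct m) (simp_all add: H_filtration.simps(2) subspace_sums linear_subspace_image[OF linear_H_pow])

lemma H_filtration_Suc_mono: "subspace S \<Longrightarrow> H_filtration S m \<subseteq> H_filtration S (Suc m)"
  using H_filtration_SucI[of 0 S _ m] by (auto simp: subspace_0 linear_0[OF linear_H_pow])

lemma H_filtration_mono: "subspace S \<Longrightarrow> m \<le> n \<Longrightarrow> H_filtration S m \<subseteq> H_filtration S n"
  by (rule lift_Suc_mono_le[of "H_filtration S"]) (auto dest: H_filtration_Suc_mono)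

lemma H_filtration_subset: "S \<subseteq> S' \<Longrightarrow> H_filtration S m \<subseteq> H_filtration S' m"
  by (induct m) (auto elim!: H_filtration_SucE intro!: H_filtration_SucI)

lemma H_filtration_H:
  "subspace S \<Longrightarrow> x \<in> H_filtration S m \<Longrightarrow> H x \<in> H_filtration S (Suc m)"
proof (induct m arbitrary: x)
  case 0
  then show ?case
    using subspace_0[OF subspace_H_filtration, of S "Suc 0"] by (simp add: linear_0[OF linear_H])
next
  case (Suc m)
  then obtain z y where x: "x = (H ^^ m) z + y" "z \<in> S" "y \<in> H_filtration S m"
    by (metis H_filtration_SucE)
  have "H x = (H ^^ Suc m) z + H y"
    using x by (simp add: linear_add[OF linear_H])
  moreover have "H y \<in> H_filtration S (Suc m)"
    using x Suc by simp
  ultimately show ?case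
    using x by (simp only: H_filtration_SucI)
qed

lemma subspace_H_hull:
  assumes "subspace S"
  shows "subspace (H_hull S)"
  unfolding subspace_def H_hull_def
proof (intro conjI ballI allI)
  show "0 \<in> (\<Union>m. H_filtration S m)"
    using H_filtration.simps(1) by blast
next
  fix x y assume "x \<in> (\<Union>m. H_filtration S m)" "y \<in> (\<Union>m. H_filtration S m)"
  then obtain m n where "x \<in> H_filtration S m" "y \<in> H_filtration S n"
    by blast
  then have "x \<in> H_filtration S (max m n)" "y \<in> H_filtration S (max m n)"
    using H_filtration_mono[OF assms] by (meson max.cobounded1 max.cobounded2 subsetD)+
  then show "x + y \<in> (\<Union>m. H_filtration S m)"
    using subspace_add[OF subspace_H_filtration[OF assms]] by blast
next
  fix a x assume "x \<in> (\<Union>m. H_filtration S m)"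
  then show "scale a x \<in> (\<Union>m. H_filtration S m)"
    using subspace_scale[OF subspace_H_filtration[OF assms]] by blast
qed

lemma H_hull_H: "subspace S \<Longrightarrow> x \<in> H_hull S \<Longrightarrow> H x \<in> H_hull S"
  unfolding H_hull_def using H_filtration_H by blast

lemma subset_H_hull: "subspace S \<Longrightarrow> S \<subseteq> H_hull S"
  unfolding H_hull_def using H_filtration_SucI[of _ S 0 0] by force

lemma H_hull_shift_pow:
  "subspace S \<Longrightarrow> x \<in> H_hull S \<Longrightarrow> ((\<lambda>y. H y + scale b y) ^^ m) x \<in> H_hull S"
  by (induct m) (simp_all add: H_hull_H subspace_add subspace_scale subspace_H_hull)

lemma funpow_intertwine: "(\<And>x. T (H x) = K (T x)) \<Longrightarrow> T ((H ^^ m) x) = (K ^^ m) (T x)"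
  by (induct m) simp_all

lemma H_hull_invariant:
  assumes T: "lin T" and TH: "\<And>x. T (H x) = H (T x) + scale b (T x)"
    and S: "subspace S" "T ` S \<subseteq> H_hull S"
  shows "T ` H_hull S \<subseteq> H_hull S"
proof -
  have "T x \<in> H_hull S" if "x \<in> H_filtration S m" for x m
    using that
  proof (induct m arbitrary: x)
    case 0
    then show ?case
      using T S by (simp add: linear_0 subspace_0 subspace_H_hull)
  next
    case (Suc m)
    then obtain z y where x: "x = (H ^^ m) z + y" "z \<in> S" "y \<in> H_filtration S m"
      by (metis H_filtration_SucE)
    have "T x = ((\<lambda>y. H y + scale b y) ^^ m) (T z) + T y"
      using x T TH by (simp add: linear_add funpow_intertwine)
    moreover have "T z \<in> H_hull S"
      using x S by blast
    ultimately show ?case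
      using x Suc S by (simp add: H_hull_shift_pow subspace_add subspace_H_hull)
  qed
  then show ?thesis
    unfolding H_hull_def by blast
qed

lemma shift_pow_leading_terms:
  assumes S: "subspace S" "z \<in> S"
  shows "((\<lambda>x. H x + scale b x) ^^ Suc m) z - (H ^^ Suc m) z - scale (of_nat (Suc m) * b) ((H ^^ m) z)
    \<in> H_filtration S m"
proof (induct m)
  case 0
  show ?case
    by (simp add: scale_left_commute)
next
  case (Suc m)
  define K where "K = (\<lambda>x. H x + scale b x)"
  define r where "r = (K ^^ Suc m) z - (H ^^ Suc m) z - scale (of_nat (Suc m) * b) ((H ^^ m) z)"
  have Hr: "H r = H ((K ^^ Suc m) z) - (H ^^ Suc (Suc m)) z - scale (of_nat (Suc m) * b) ((H ^^ Suc m) z)"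
    unfolding r_def by (simp add: linear_diff[OF linear_H] linear_scale[OF linear_H])
  have expand: "(K ^^ Suc (Suc m)) z - (H ^^ Suc (Suc m)) z - scale (of_nat (Suc (Suc m)) * b) ((H ^^ Suc m) z)
      = H r + scale (of_nat (Suc m) * b * b) ((H ^^ m) z) + scale b r"
    unfolding Hr unfolding r_def funpow.simps(2) o_apply[of K] K_def of_nat_Suc[of "Suc m"]
      distrib_right scale_left_distrib
    by (simp add: scale_right_diff_distrib algebra_simps del: funpow.simps of_nat_Suc)
  have r: "r \<in> H_filtration S m"
    using Suc unfolding r_def K_def .
  moreover have "H r \<in> H_filtration S (Suc m)"
    using H_filtration_H[OF S(1) r] .
  moreover have "scale (of_nat (Suc m) * b * b) ((H ^^ m) z) \<in> H_filtration S (Suc m)"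
    using H_filtration_SucI[of _ S 0 m] S
    by (simp add: subspace_scale subspace_0 subspace_H_filtration linear_scale[OF linear_H_pow])
  moreover have "scale b r \<in> H_filtration S (Suc m)"
    using r S H_filtration_Suc_mono by (meson subsetD subspace_scale subspace_H_filtration)
  ultimately have "H r + scale (of_nat (Suc m) * b * b) ((H ^^ m) z) + scale b r \<in> H_filtration S (Suc m)"
    using S by (simp add: subspace_add subspace_H_filtration)
  then show ?case
    using expand by (simp only: K_def)
qed

lemma H_hull_poly_op:
  "subspace S \<Longrightarrow> x \<in> H_hull S \<Longrightarrow> poly_op scale p H x \<in> H_hull S"
  by (induct p rule: pCons_induct)
    (simp_all add: poly_op_pCons[OF linear_H] subspace_0 subspace_add subspace_scale H_hull_H subspace_H_hull)

end

locale R_module = linear_operator scale H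
  for scale :: "complex \<Rightarrow> 'v::ab_group_add \<Rightarrow> 'v" and H +
  fixes f :: "complex poly" and E F :: "'v \<Rightarrow> 'v"
  assumes linear_E: "Vector_Spaces.linear scale scale E"
    and linear_F: "Vector_Spaces.linear scale scale F"
    and EF_commutator: "E (F x) - F (E x) = poly_op scale f H x"
    and HE_commutator: "H (E x) - E (H x) = E x"
    and HF_commutator: "H (F x) - F (H x) = - F x"
begin

lemma E_H: "E (H x) = H (E x) + scale (-1) (E x)"
  using HE_commutator[of x] by (simp add: algebra_simps)

lemma F_H: "F (H x) = H (F x) + scale 1 (F x)"
  using HF_commutator[of x] by (simp add: algebra_simps)

lemma E_poly_op_H: "E (poly_op scale p H x) = poly_op scale (p \<circ>\<^sub>p [:-1, 1:]) H (E x)"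
proof -
  have "E (poly_op scale p H x) = poly_op scale p (\<lambda>y. H y + scale (-1) y) (E x)"
    by (rule poly_op_intertwine[OF linear_E linear_H linear_plus_scale[OF linear_H]]) (rule E_H)
  also have "\<dots> = poly_op scale (p \<circ>\<^sub>p [:-1, 1:]) H (E x)"
    by (rule poly_op_shift[OF linear_H])
  finally show ?thesis .
qed

lemma linear_Casimir: "lin (Casimir scale u E F H)"
proof -
  have "lin (\<lambda>x. scale 2 (F (E x)) + poly_op scale (u \<circ>\<^sub>p [:1, 1:]) H x)"
    by (intro linear_compose_add linear_compose_scale_right linear_poly_op[OF linear_H]
        Vector_Spaces.linear_compose[OF linear_E linear_F, unfolded o_def])
  then show ?thesis
    by (simp add: Casimir_def[abs_def])
qed

lemma E_Casimir:
  assumes u_shift: "u \<circ>\<^sub>p [:1, 1:] = u + smult 2 f"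
  shows "E (Casimir scale u E F H x) = Casimir scale u E F H (E x)"
proof -
  have u_back: "(u \<circ>\<^sub>p [:1, 1:]) \<circ>\<^sub>p [:-1, 1:] = u"
    by (simp add: pcompose_pCons flip: pcompose_assoc)
  have "E (Casimir scale u E F H x)
      = scale 2 (F (E (E x)) + poly_op scale f H (E x)) + poly_op scale u H (E x)"
    using EF_commutator[of "E x"]
    by (simp add: Casimir_def linear_add[OF linear_E] linear_scale[OF linear_E] E_poly_op_H u_back
        algebra_simps)
  also have "\<dots> = Casimir scale u E F H (E x)"
    by (simp add: Casimir_def u_shift poly_op_add poly_op_smult scale_right_distrib algebra_simps)
  finally show ?thesis .
qed

end

lemma is_R_module_imp_R_module: "is_R_module sc f E F H \<Longrightarrow> R_module sc H f E F"
  by (simp add: is_R_module_def R_module_def R_module_axioms_def linear_operator_def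
      linear_operator_axioms_def complex_vector_space_def)

locale whittaker_R_module = R_module scale H f E F
  for scale :: "complex \<Rightarrow> 'v::ab_group_add \<Rightarrow> 'v" and H f E F +
  fixes c :: complex
  assumes c_nonzero: "c \<noteq> 0"
begin

definition whittaker_space :: "'v set" where
  "whittaker_space = {x. E x = scale c x}"

lemma subspace_whittaker_space: "subspace whittaker_space"
proof -
  have "lin (\<lambda>x. E x - scale c x)"
    by (intro linear_compose_sub linear_E linear_scale_self)
  from linear_subspace_kernel[OF this] show ?thesis
    by (simp add: whittaker_space_def)
qed

lemma defect_add: "E (x + y) - scale c (x + y) = (E x - scale c x) + (E y - scale c y)"
  by (simp add: linear_add[OF linear_E] scale_right_distrib)

lemma defect_H_pow:
  assumes z: "z \<in> whittaker_space"
  obtains r where "r \<in> H_filtration whittaker_space m"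
    and "E ((H ^^ Suc m) z) - scale c ((H ^^ Suc m) z) = (H ^^ m) (scale (- c * of_nat (Suc m)) z) + r"
proof
  define K where "K = (\<lambda>x. H x + scale (-1) x)"
  have "E ((H ^^ Suc m) z) = (K ^^ Suc m) (E z)"
    unfolding K_def by (rule funpow_intertwine) (rule E_H)
  also have "\<dots> = (K ^^ Suc m) (scale c z)"
    using z by (simp add: whittaker_space_def)
  also have "\<dots> = scale c ((K ^^ Suc m) z)"
    unfolding K_def by (rule linear_scale[OF linear_funpow[OF linear_plus_scale[OF linear_H]]])
  finally show "E ((H ^^ Suc m) z) - scale c ((H ^^ Suc m) z)
      = (H ^^ m) (scale (- c * of_nat (Suc m)) z)
        + scale c ((K ^^ Suc m) z - (H ^^ Suc m) z - scale (of_nat (Suc m) * -1) ((H ^^ m) z))"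
    unfolding linear_scale[OF linear_H_pow] by (simp add: scale_right_diff_distrib algebra_simps)
  show "scale c ((K ^^ Suc m) z - (H ^^ Suc m) z - scale (of_nat (Suc m) * -1) ((H ^^ m) z))
      \<in> H_filtration whittaker_space m"
    using shift_pow_leading_terms[OF subspace_whittaker_space z, where b="-1" and m=m]
    by (simp add: K_def subspace_scale subspace_H_filtration subspace_whittaker_space)
qed

lemma defect_H_filtration:
  "x \<in> H_filtration whittaker_space (Suc m) \<Longrightarrow> E x - scale c x \<in> H_filtration whittaker_space m"
proof (induct m arbitrary: x)
  case 0
  then show ?case
    by (auto simp: H_filtration.simps(2) whittaker_space_def)
next
  case (Suc m)
  then obtain z y where x: "x = (H ^^ Suc m) z + y" "z \<in> whittaker_space"
    "y \<in> H_filtration whittaker_space (Suc m)"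
    by (metis H_filtration_SucE)
  obtain r where r: "r \<in> H_filtration whittaker_space m"
    "E ((H ^^ Suc m) z) - scale c ((H ^^ Suc m) z) = (H ^^ m) (scale (- c * of_nat (Suc m)) z) + r"
    using defect_H_pow[OF x(2)] .
  have "E x - scale c x = (H ^^ m) (scale (- c * of_nat (Suc m)) z) + (r + (E y - scale c y))"
    using x r by (simp only: defect_add add.assoc)
  moreover have "scale (- c * of_nat (Suc m)) z \<in> whittaker_space"
    using x(2) by (rule subspace_scale[OF subspace_whittaker_space])
  moreover have "r + (E y - scale c y) \<in> H_filtration whittaker_space m"
    using r x Suc by (simp add: subspace_add subspace_H_filtration subspace_whittaker_space)
  ultimately show ?case
    by (simp only: H_filtration_SucI)
qed

lemma defect_H_filtration_leading:
  assumes z: "z \<in> whittaker_space" and y: "y \<in> H_filtration whittaker_space (Suc m)"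
  obtains r where "r \<in> H_filtration whittaker_space m"
    and "E ((H ^^ Suc m) z + y) - scale c ((H ^^ Suc m) z + y)
      = (H ^^ m) (scale (- c * of_nat (Suc m)) z) + r"
proof -
  obtain r where r: "r \<in> H_filtration whittaker_space m"
    "E ((H ^^ Suc m) z) - scale c ((H ^^ Suc m) z) = (H ^^ m) (scale (- c * of_nat (Suc m)) z) + r"
    using defect_H_pow[OF z] .
  show ?thesis
  proof
    show "r + (E y - scale c y) \<in> H_filtration whittaker_space m"
      using r(1) defect_H_filtration[OF y] subspace_whittaker_space
      by (simp add: subspace_add subspace_H_filtration)
    show "E ((H ^^ Suc m) z + y) - scale c ((H ^^ Suc m) z + y)
      = (H ^^ m) (scale (- c * of_nat (Suc m)) z) + (r + (E y - scale c y))"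
      using r(2) by (simp only: defect_add add.assoc)
  qed
qed

lemma whittaker_leading_component_zero:
  assumes "z \<in> whittaker_space" "y \<in> H_filtration whittaker_space (Suc m)"
    and "(H ^^ Suc m) z + y \<in> whittaker_space"
  shows "z = 0"
  using assms
proof (induct m arbitrary: z y)
  case 0
  then obtain r where "r \<in> H_filtration whittaker_space 0"
    and "E ((H ^^ 1) z + y) - scale c ((H ^^ 1) z + y) = (H ^^ 0) (scale (- c * of_nat 1) z) + r"
    using defect_H_filtration_leading by (metis One_nat_def)
  then show ?case
    using "0.prems"(3) c_nonzero by (simp add: whittaker_space_def)
next
  case (Suc m)
  then obtain r where r: "r \<in> H_filtration whittaker_space (Suc m)"
    and "E ((H ^^ Suc (Suc m)) z + y) - scale c ((H ^^ Suc (Suc m)) z + y)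
      = (H ^^ Suc m) (scale (- c * of_nat (Suc (Suc m))) z) + r"
    using defect_H_filtration_leading by metis
  then have "(H ^^ Suc m) (scale (- c * of_nat (Suc (Suc m))) z) + r \<in> whittaker_space"
    using Suc.prems(3) subspace_0[OF subspace_whittaker_space] by (simp add: whittaker_space_def)
  then have "scale (- c * of_nat (Suc (Suc m))) z = 0"
    using Suc.hyps Suc.prems(1) r subspace_scale[OF subspace_whittaker_space] by blast
  then show ?case
    using c_nonzero by (simp del: of_nat_Suc)
qed

lemma whittaker_space_Int_H_hull:
  assumes S: "subspace S" "S \<subseteq> whittaker_space"
  shows "whittaker_space \<inter> H_hull S = S"
proof
  show "S \<subseteq> whittaker_space \<inter> H_hull S"
    using S subset_H_hull by blast
  have "x \<in> S" if "x \<in> H_filtration S m" "x \<in> whittaker_space" for x m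
    using that
  proof (induct m arbitrary: x)
    case 0
    then show ?case
      using S by (simp add: subspace_0)
  next
    case (Suc m)
    note IH = Suc.hyps and x_whittaker = Suc.prems(2)
    obtain z y where x: "x = (H ^^ m) z + y" "z \<in> S" "y \<in> H_filtration S m"
      using Suc.prems(1) by (metis H_filtration_SucE)
    show ?case
    proof (cases m)
      case 0
      then show ?thesis
        using x by simp
    next
      case (Suc k)
      have "z = 0"
      proof (rule whittaker_leading_component_zero)
        show "z \<in> whittaker_space"
          using x S by blast
        show "y \<in> H_filtration whittaker_space (Suc k)"
          using x S Suc H_filtration_subset by blast
        show "(H ^^ Suc k) z + y \<in> whittaker_space"
          using x x_whittaker Suc by simp
      qed
      then show ?thesis
        using x x_whittaker IH by (simp add: linear_0[OF linear_H_pow])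
    qed
  qed
  then show "whittaker_space \<inter> H_hull S \<subseteq> S"
    unfolding H_hull_def by blast
qed

end

locale cyclic_whittaker = whittaker_R_module scale H f E F c
  for scale :: "complex \<Rightarrow> 'v::ab_group_add \<Rightarrow> 'v" and H f E F c +
  fixes u :: "complex poly" and w :: 'v
  assumes u_shift: "u \<circ>\<^sub>p [:1, 1:] = u + smult 2 f"
    and whittaker_w: "E w = scale c w"
begin

abbreviation Casimir_op :: "'v \<Rightarrow> 'v" (\<open>\<Omega>\<close>) where
  "\<Omega> \<equiv> Casimir scale u E F H"

lemma linear_Omega: "lin \<Omega>"
  by (rule linear_Casimir)

text \<open>\<open>Zw\<close> is \<open>Z(R) w\<close>, as \<open>Z(R) = \<complex>[\<Omega>]\<close>.\<close>

definition Zw :: "'v set" where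
  "Zw = range (\<lambda>p. poly_op scale p \<Omega> w)"

lemma subspace_Zw: "subspace Zw"
  unfolding subspace_def Zw_def
proof (intro conjI ballI allI)
  show "0 \<in> range (\<lambda>p. poly_op scale p \<Omega> w)"
    by (rule range_eqI[of _ _ 0]) simp
next
  fix x y assume "x \<in> range (\<lambda>p. poly_op scale p \<Omega> w)" "y \<in> range (\<lambda>p. poly_op scale p \<Omega> w)"
  then obtain p q where "x = poly_op scale p \<Omega> w" "y = poly_op scale q \<Omega> w"
    by blast
  then show "x + y \<in> range (\<lambda>p. poly_op scale p \<Omega> w)"
    by (intro range_eqI[of _ _ "p + q"]) (simp add: poly_op_add)
next
  fix a x assume "x \<in> range (\<lambda>p. poly_op scale p \<Omega> w)"
  then obtain p where "x = poly_op scale p \<Omega> w"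
    by blast
  then show "scale a x \<in> range (\<lambda>p. poly_op scale p \<Omega> w)"
    by (intro range_eqI[of _ _ "smult a p"]) (simp add: poly_op_smult)
qed

lemma w_in_Zw: "w \<in> Zw"
proof -
  have "poly_op scale 1 \<Omega> w = w"
    using poly_op_const[of 1 \<Omega> w] by (simp add: pCons_one)
  then show ?thesis
    unfolding Zw_def by (metis rangeI)
qed

lemma Casimir_Zw: "z \<in> Zw \<Longrightarrow> \<Omega> z \<in> Zw"
proof -
  assume "z \<in> Zw"
  then obtain p where "z = poly_op scale p \<Omega> w"
    by (auto simp: Zw_def)
  then have "\<Omega> z = poly_op scale (pCons 0 p) \<Omega> w"
    by (simp add: poly_op_pCons[OF linear_Omega])
  then show ?thesis
    by (simp add: Zw_def)
qed

lemma Zw_subset_whittaker_space: "Zw \<subseteq> whittaker_space"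
proof
  fix z assume "z \<in> Zw"
  then obtain p where z: "z = poly_op scale p \<Omega> w"
    by (auto simp: Zw_def)
  have "E z = poly_op scale p \<Omega> (E w)"
    unfolding z using linear_E linear_Omega linear_Omega E_Casimir[OF u_shift]
    by (rule poly_op_intertwine)
  also have "\<dots> = scale c z"
    unfolding z whittaker_w by (rule linear_scale[OF linear_poly_op[OF linear_Omega]])
  finally show "z \<in> whittaker_space"
    by (simp add: whittaker_space_def)
qed

lemma F_Zw: "z \<in> Zw \<Longrightarrow> F z \<in> H_hull Zw"
proof -
  assume z: "z \<in> Zw"
  let ?U = "poly_op scale (u \<circ>\<^sub>p [:1, 1:]) H"
  have "\<Omega> z = scale (2 * c) (F z) + ?U z"
    using z Zw_subset_whittaker_space
    by (auto simp: Casimir_def whittaker_space_def linear_scale[OF linear_F])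
  then have "F z = scale (1 / (2 * c)) (\<Omega> z - ?U z)"
    using c_nonzero by simp
  moreover have "\<Omega> z \<in> H_hull Zw"
    using z Casimir_Zw subset_H_hull[OF subspace_Zw] by blast
  moreover have "?U z \<in> H_hull Zw"
    using z subset_H_hull[OF subspace_Zw] by (blast intro: H_hull_poly_op[OF subspace_Zw])
  ultimately show ?thesis
    by (simp add: subspace_diff subspace_scale subspace_H_hull[OF subspace_Zw])
qed

lemma R_span_subset_H_hull: "R_span scale E F H w \<subseteq> H_hull Zw"
proof
  fix x assume "x \<in> R_span scale E F H w"
  then show "x \<in> H_hull Zw"
  proof (induct rule: R_span.induct)
    case gen
    show ?case
      using w_in_Zw subset_H_hull[OF subspace_Zw] by blast
  next
    case zero
    show ?case
      by (rule subspace_0[OF subspace_H_hull[OF subspace_Zw]])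
  next
    case (add x y)
    then show ?case
      by (simp add: subspace_add[OF subspace_H_hull[OF subspace_Zw]])
  next
    case (smult x a)
    then show ?case
      by (simp add: subspace_scale[OF subspace_H_hull[OF subspace_Zw]])
  next
    case (actE x)
    have "E ` Zw \<subseteq> Zw"
      using Zw_subset_whittaker_space subspace_scale[OF subspace_Zw]
      by (force simp: whittaker_space_def)
    then have "E ` Zw \<subseteq> H_hull Zw"
      using subset_H_hull[OF subspace_Zw] by blast
    with actE show ?case
      using H_hull_invariant[OF linear_E E_H subspace_Zw] by blast
  next
    case (actF x)
    then show ?case
      using H_hull_invariant[OF linear_F F_H subspace_Zw] F_Zw by blast
  next
    case (actH x)
    then show ?case
      by (simp add: H_hull_H[OF subspace_Zw])
  qed
qed

lemma whittaker_space_eq_Zw: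
  assumes "R_span scale E F H w = UNIV"
  shows "whittaker_space = Zw"
  using whittaker_space_Int_H_hull[OF subspace_Zw Zw_subset_whittaker_space]
    R_span_subset_H_hull assms by auto

end

lemma pcompose_shift_by_one:
  fixes f u :: "complex poly"
  assumes "\<forall>x. poly f x = (poly u (x + 1) - poly u x) / 2"
  shows "u \<circ>\<^sub>p [:1, 1:] = u + smult 2 f"
  by (rule poly_eq_poly_eq_iff[THEN iffD1], rule ext)
    (use assms in \<open>simp add: poly_pcompose algebra_simps\<close>)

theorem mainTheorem4:
  fixes sc :: "complex \<Rightarrow> 'v::ab_group_add \<Rightarrow> 'v"
    and f u :: "complex poly"
    and E F H :: "'v \<Rightarrow> 'v"
    and c :: complex and w v :: 'v
  assumes u_def: "\<forall>x. poly f x = (poly u (x + 1) - poly u x) / 2"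
    and module: "is_R_module sc f E F H"
    and c_nz: "c \<noteq> 0"
    and w_whit: "whittaker_vector E sc c w"
    and cyclic: "R_span sc E F H w = UNIV"
  shows "whittaker_vector E sc c v \<longleftrightarrow>
         (\<exists>p :: complex poly. v = poly_op sc p (Casimir sc u E F H) w)"
proof -
  interpret R_module sc H f E F
    using module by (rule is_R_module_imp_R_module)
  interpret cyclic_whittaker sc H f E F c u w
    by unfold_locales
      (use c_nz w_whit pcompose_shift_by_one[OF u_def] in \<open>simp_all add: whittaker_vector_def\<close>)
  have "whittaker_space = Zw"
    using cyclic by (rule whittaker_space_eq_Zw)
  then show ?thesis
    by (auto simp: whittaker_vector_def whittaker_space_def Zw_def set_eq_iff)
qed

end
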